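(* Let $p\in[1,\infty]$ and $q$ its dual exponent ($1/p+1/q=1$). Let $\boldsymbol{\mu}_+,\boldsymbol{\mu}_-\in\mathbb{R}^d$, $\sigma>0$, and let $(\boldsymbol{X},Y)$ be random with $P(Y=+)=P(Y=-)=1/2$ and $\boldsymbol{X}\mid Y=i\sim N(\boldsymbol{\mu}_i,\sigma^2\boldsymbol{I}_d)$. Let $\boldsymbol{w}\in\mathbb{R}^d\setminus\{\boldsymbol{0}\}$, $b\in\mathbb{R}$, and let the linear classifier assign $\boldsymbol{x}$ to class $+$ iff $\boldsymbol{w}\cdot\boldsymbol{x}+b>0$. Let $\varepsilon>0$, $\boldsymbol{\mu}=\frac12(\boldsymbol{\mu}_+-\boldsymbol{\mu}_-)$, $\bar{\boldsymbol{\mu}}=\frac12(\boldsymbol{\mu}_++\boldsymbol{\mu}_-)$, $b'=\boldsymbol{w}\cdot\bar{\boldsymbol{\mu}}+b$. Let $p_m$ be the probability that $\boldsymbol{X}$ is misclassified and $p_{adv|p}$ the probability that $\boldsymbol{X}$ is correctly classified and there is $\boldsymbol{x}'$ with $\|\boldsymbol{X}-\boldsymbol{x}'\|_p\le\varepsilon$ that is assigned a different class than $\boldsymbol{X}$. Then $$p_{adv|p}=1-p_m-\frac12\left[\Phi\!\left(\frac{\boldsymbol{w}\cdot\boldsymbol{\mu}+b'}{\|\boldsymbol{w}\|_2\sigma}-\frac{\|\boldsymbol{w}\|_q}{\|\boldsymbol{w}\|_2}\frac{\varepsilon}{\sigma}\right)+\Phi\!\left(\frac{\boldsymbol{w}\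cdot\boldsymbol{\mu}-b'}{\|\boldsymbol{w}\|_2\sigma}-\frac{\|\boldsymbol{w}\|_q}{\|\boldsymbol{w}\|_2}\frac{\varepsilon}{\sigma}\right)\right].$$
   Context: $\Phi$ denotes the standard normal CDF. *)

theory Defs
  imports "HOL-Analysis.Analysis" "HOL-Probability.Probability"
begin

definition Phi :: "real \<Rightarrow> real" where
  "Phi x = (LBINT t:{..x}. std_normal_density t)"

definition pnorm :: "ereal \<Rightarrow> real ^ 'd \<Rightarrow> real" where
  "pnorm p x = (if p = \<infinity> then Max (range (\<lambda>i. \<bar>x $ i\<bar>))
     else (\<Sum>i\<in>UNIV. \<bar>x $ i\<bar> powr real_of_ereal p) powr (1 / real_of_ereal p))"

definition gauss_iso :: "real ^ 'd \<Rightarrow> real \<Rightarrow> (real ^ 'd) measure" where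
  "gauss_iso m s = density lborel (\<lambda>x. ennreal (\<Prod>i\<in>UNIV. normal_density (m $ i) s (x $ i)))"

text \<open>Linear classifier: True (class +) iff w.x + b > 0.\<close>
definition lin_class :: "real ^ 'd \<Rightarrow> real \<Rightarrow> real ^ 'd \<Rightarrow> bool" where
  "lin_class w b x \<longleftrightarrow> w \<bullet> x + b > 0"

end

theory Submission
  imports Defs
begin

text \<open>
  By Hoelder's inequality the margin \<open>w \<bullet> x + b\<close> varies by at most \<open>\<epsilon> ||w||\<^sub>q\<close> on the
  \<open>\<epsilon>\<close>-ball of the p-norm around \<open>x\<close>, and a step along a vector attaining the dual norm
  achieves this.  Hence a correctly classified point can be pushed across the hyperplane exactly
  when its margin lies in \<open>(0, \<epsilon> ||w||\<^sub>q]\<close> (class +) or in \<open>(-\<epsilon> ||w||\<^sub>q, 0]\<close> (class -).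
  Given the class, \<open>w \<bullet> X + b\<close> is a linear combination of independent normal coordinates,
  so it is normal with standard deviation \<open>\<sigma> ||w||\<^sub>2\<close>.  Both probabilities are thus averages
  of normal interval probabilities, and the formula follows from \<open>\<Phi>(-x) = 1 - \<Phi>(x)\<close>.
\<close>

section \<open>Hoelder duality for p-norms\<close>

lemma dual_exponents_cases:
  fixes p q :: ereal
  assumes "1 \<le> p" "1 \<le> q" "1 / p + 1 / q = 1"
  obtains "p = 1" "q = \<infinity>"
    | "p = \<infinity>" "q = 1"
    | r s where "p = ereal r" "q = ereal s" "1 < r" "1 < s" "1 / r + 1 / s = 1"
proof (cases p)
  case (real r)
  with assms have r: "1 \<le> r" by simp
  then have inv_p: "1 / p = ereal (1 / r)" using real by (simp add: one_ereal_def)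
  show ?thesis
  proof (cases q)
    case (real s)
    with assms have s: "1 \<le> s" by simp
    then have "1 / q = ereal (1 / s)" using real by (simp add: one_ereal_def)
    with assms inv_p have rs: "1 / r + 1 / s = 1" by (simp add: one_ereal_def)
    with r s have "1 < r" "1 < s" by (auto simp: le_less)
    with rs \<open>p = ereal r\<close> real show ?thesis using that by blast
  next
    case PInf
    with assms inv_p have "r = 1" by (simp add: one_ereal_def)
    with PInf real show ?thesis using that by (simp add: one_ereal_def)
  next
    case MInf
    with assms show ?thesis by simp
  qed
next
  case PInf
  with assms have "1 / q = 1" by simp
  with assms(2) have "q = 1" by (cases q) (auto simp: one_ereal_def split: if_splits)
  with PInf show ?thesis using that by simp
next
  case MInf
  with assms show ?thesis by simp
qed

lemma Holder_inequality_sum: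
  fixes a b :: "'i \<Rightarrow> real"
  assumes "finite I" and rs: "1 < r" "1 < s" "1 / r + 1 / s = 1"
  shows "(\<Sum>i\<in>I. \<bar>a i\<bar> * \<bar>b i\<bar>)
     \<le> (\<Sum>i\<in>I. \<bar>a i\<bar> powr r) powr (1 / r) * (\<Sum>i\<in>I. \<bar>b i\<bar> powr s) powr (1 / s)"
proof -
  define A where "A = (\<Sum>i\<in>I. \<bar>a i\<bar> powr r)"
  define B where "B = (\<Sum>i\<in>I. \<bar>b i\<bar> powr s)"
  have "A \<ge> 0" "B \<ge> 0" unfolding A_def B_def by (auto intro: sum_nonneg)
  show ?thesis
  proof (cases "A = 0 \<or> B = 0")
    case True
    then have "\<forall>i\<in>I. a i = 0 \<or> b i = 0"
      unfolding A_def B_def using \<open>finite I\<close> by (auto simp: sum_nonneg_eq_0_iff)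
    then have "(\<Sum>i\<in>I. \<bar>a i\<bar> * \<bar>b i\<bar>) = 0" by (intro sum.neutral) auto
    then show ?thesis by (simp add: A_def[symmetric] B_def[symmetric])
  next
    case False
    with \<open>A \<ge> 0\<close> \<open>B \<ge> 0\<close> have "A > 0" "B > 0" by auto
    define A' where "A' = A powr (1 / r)"
    define B' where "B' = B powr (1 / s)"
    have "A' > 0" "B' > 0" using \<open>A > 0\<close> \<open>B > 0\<close> unfolding A'_def B'_def by auto
    have A': "A' powr r = A" and B': "B' powr s = B"
      unfolding A'_def B'_def using \<open>A > 0\<close> \<open>B > 0\<close> rs by (simp_all add: powr_powr)
    have Young: "\<bar>a i\<bar> / A' * (\<bar>b i\<bar> / B') \<le> \<bar>a i\<bar> powr r / A / r + \<bar>b i\<bar> powr s / B / s" for i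
      using Youngs_inequality[of r s "\<bar>a i\<bar> / A'" "\<bar>b i\<bar> / B'"] rs \<open>A' > 0\<close> \<open>B' > 0\<close>
      by (simp add: powr_divide A' B')
    have "(\<Sum>i\<in>I. \<bar>a i\<bar> * \<bar>b i\<bar>) / (A' * B') = (\<Sum>i\<in>I. \<bar>a i\<bar> / A' * (\<bar>b i\<bar> / B'))"
      by (simp add: sum_divide_distrib)
    also have "\<dots> \<le> (\<Sum>i\<in>I. \<bar>a i\<bar> powr r / A / r + \<bar>b i\<bar> powr s / B / s)"
      by (intro sum_mono Young)
    also have "\<dots> = A / A / r + B / B / s"
      by (simp add: sum.distrib sum_divide_distrib[symmetric] A_def B_def)
    also have "\<dots> = 1" using \<open>A > 0\<close> \<open>B > 0\<close> rs by simp
    finally show ?thesis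
      using \<open>A' > 0\<close> \<open>B' > 0\<close> by (simp add: divide_le_eq A'_def B'_def A_def B_def)
  qed
qed

lemma pnorm_ereal: "pnorm (ereal r) v = (\<Sum>i\<in>UNIV. \<bar>v $ i\<bar> powr r) powr (1 / r)"
  by (simp add: pnorm_def)

lemma pnorm_one: "pnorm 1 v = (\<Sum>i\<in>UNIV. \<bar>v $ i\<bar>)"
  by (simp add: pnorm_def sum_nonneg)

lemma pnorm_infinity: "pnorm \<infinity> v = Max (range (\<lambda>i. \<bar>v $ i\<bar>))"
  by (simp add: pnorm_def)

lemma abs_nth_le_pnorm_infinity: "\<bar>v $ i\<bar> \<le> pnorm \<infinity> v"
  unfolding pnorm_infinity by (rule Max_ge) auto

lemma pnorm_nonneg: "0 \<le> pnorm p v"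
proof (cases "p = \<infinity>")
  case True
  then show ?thesis using abs_nth_le_pnorm_infinity[of v] abs_ge_zero by (metis order_trans)
qed (simp add: pnorm_def)

lemma pnorm_scaleR:
  assumes "1 \<le> p"
  shows "pnorm p (c *\<^sub>R v) = \<bar>c\<bar> * pnorm p v"
proof (cases p)
  case (real r)
  with assms have "0 < r" by simp
  have "(\<Sum>i\<in>UNIV. \<bar>(c *\<^sub>R v) $ i\<bar> powr r) = \<bar>c\<bar> powr r * (\<Sum>i\<in>UNIV. \<bar>v $ i\<bar> powr r)"
    by (simp add: abs_mult powr_mult sum_distrib_left)
  with real \<open>0 < r\<close> show ?thesis by (simp add: pnorm_ereal powr_mult sum_nonneg powr_powr)
next
  case PInf
  have "\<bar>c\<bar> * Max (range (\<lambda>i. \<bar>v $ i\<bar>)) = Max ((\<lambda>x. \<bar>c\<bar> * x) ` range (\<lambda>i. \<bar>v $ i\<bar>))"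
    by (rule mono_Max_commute) (auto intro!: monoI mult_left_mono)
  with PInf show ?thesis by (simp add: pnorm_infinity abs_mult image_image)
next
  case MInf
  with assms show ?thesis by simp
qed

lemma abs_inner_le_sum_abs_mult: "\<bar>v \<bullet> w\<bar> \<le> (\<Sum>i\<in>UNIV. \<bar>v $ i\<bar> * \<bar>w $ i\<bar>)"
  unfolding inner_vec_def inner_real_def abs_mult[symmetric] by (rule sum_abs)

lemma abs_inner_le_pnorm_ereal_mult:
  assumes "1 < r" "1 < s" "1 / r + 1 / s = 1"
  shows "\<bar>v \<bullet> w\<bar> \<le> pnorm (ereal r) v * pnorm (ereal s) w"
  using abs_inner_le_sum_abs_mult[of v w]
    Holder_inequality_sum[OF _ assms, where a = "\<lambda>i. v $ i" and b = "\<lambda>i. w $ i"]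
  by (simp add: pnorm_ereal order_trans)

lemma abs_inner_le_pnorm_one_mult_infinity: "\<bar>v \<bullet> w\<bar> \<le> pnorm 1 v * pnorm \<infinity> w"
proof -
  have "\<bar>v \<bullet> w\<bar> \<le> (\<Sum>i\<in>UNIV. \<bar>v $ i\<bar> * \<bar>w $ i\<bar>)" by (rule abs_inner_le_sum_abs_mult)
  also have "\<dots> \<le> (\<Sum>i\<in>UNIV. \<bar>v $ i\<bar> * pnorm \<infinity> w)"
    by (intro sum_mono mult_left_mono abs_nth_le_pnorm_infinity) auto
  finally show ?thesis by (simp add: pnorm_one sum_distrib_right)
qed

lemma abs_inner_le_pnorm_mult_dual:
  assumes "1 \<le> p" "1 \<le> q" "1 / p + 1 / q = 1"
  shows "\<bar>w \<bullet> v\<bar> \<le> pnorm p v * pnorm q w"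
  using assms
proof (cases rule: dual_exponents_cases)
  case 1
  then show ?thesis using abs_inner_le_pnorm_one_mult_infinity[of v w] by (simp add: inner_commute)
next
  case 2
  then show ?thesis using abs_inner_le_pnorm_one_mult_infinity[of w v] by (simp add: mult.commute)
next
  case (3 r s)
  then show ?thesis using abs_inner_le_pnorm_ereal_mult[of r s v w] by (simp add: inner_commute)
qed

lemma pnorm_ereal_dual_attained:
  fixes w :: "real ^ 'd"
  assumes rs: "1 < r" "1 < s" "1 / r + 1 / s = 1"
  shows "\<exists>v. pnorm (ereal r) v \<le> 1 \<and> pnorm (ereal s) w \<le> w \<bullet> v"
proof -
  define A where "A = (\<Sum>i\<in>UNIV. \<bar>w $ i\<bar> powr s)"
  \<comment> \<open>\<open>u\<close> is the extremal vector of the equality case of Hoelder's inequality.\<close>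
  define u :: "real ^ 'd" where "u = (\<chi> i. sgn (w $ i) * \<bar>w $ i\<bar> powr (s - 1))"
  have "(s - 1) * r = s" using rs by (simp add: field_simps)
  then have "\<bar>u $ i\<bar> powr r = \<bar>w $ i\<bar> powr s" for i
    by (simp add: u_def abs_mult abs_sgn_eq powr_powr)
  then have norm_u: "pnorm (ereal r) u = A powr (1 / r)" by (simp add: pnorm_ereal A_def)
  have "w $ i * u $ i = \<bar>w $ i\<bar> powr s" for i
  proof (cases "w $ i = 0")
    case False
    have "w $ i * u $ i = \<bar>w $ i\<bar> * \<bar>w $ i\<bar> powr (s - 1)"
      by (simp add: u_def abs_if sgn_if)
    with False show ?thesis by (simp add: powr_mult_base)
  qed (use rs in \<open>simp add: u_def\<close>)
  then have inner_u: "w \<bullet> u = A" by (simp add: inner_vec_def A_def)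
  show ?thesis
  proof (cases "A = 0")
    case True
    then show ?thesis using rs by (intro exI[of _ 0]) (simp add: pnorm_ereal A_def[symmetric])
  next
    case False
    then have "0 < A" by (simp add: A_def order_le_neq_trans sum_nonneg)
    define v where "v = A powr (- 1 / r) *\<^sub>R u"
    have "pnorm (ereal r) v = 1"
      using \<open>0 < A\<close> rs by (simp add: v_def pnorm_scaleR norm_u powr_add[symmetric])
    have "w \<bullet> v = A * A powr (- 1 / r)" by (simp add: v_def inner_u)
    also have "\<dots> = A powr (1 - 1 / r)" using \<open>0 < A\<close> by (simp add: powr_mult_base)
    also have "1 - 1 / r = 1 / s" using rs by simp
    finally have "w \<bullet> v = pnorm (ereal s) w" by (simp add: pnorm_ereal A_def)
    with \<open>pnorm (ereal r) v = 1\<close> show ?thesis by (intro exI[of _ v]) simp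
  qed
qed

lemma pnorm_one_dual_attained:
  fixes w :: "real ^ 'd"
  shows "\<exists>v. pnorm 1 v \<le> 1 \<and> pnorm \<infinity> w \<le> w \<bullet> v"
proof -
  have "pnorm \<infinity> w \<in> range (\<lambda>i. \<bar>w $ i\<bar>)" unfolding pnorm_infinity by (rule Max_in) auto
  then obtain k where k: "pnorm \<infinity> w = \<bar>w $ k\<bar>" by blast
  define v :: "real ^ 'd" where "v = axis k (sgn (w $ k))"
  have "pnorm 1 v = \<bar>sgn (w $ k)\<bar>" by (simp add: pnorm_one v_def axis_def if_distrib cong: if_cong)
  moreover have "w \<bullet> v = \<bar>w $ k\<bar>" by (simp add: v_def inner_axis) (simp add: abs_sgn)
  ultimately show ?thesis using k by (intro exI[of _ v]) (simp add: abs_sgn_eq)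
qed

lemma pnorm_infinity_dual_attained:
  fixes w :: "real ^ 'd"
  shows "\<exists>v. pnorm \<infinity> v \<le> 1 \<and> pnorm 1 w \<le> w \<bullet> v"
proof -
  define v :: "real ^ 'd" where "v = (\<chi> i. sgn (w $ i))"
  have "pnorm \<infinity> v \<le> 1" unfolding pnorm_infinity by (subst Max_le_iff) (auto simp: v_def abs_sgn_eq)
  moreover have "w \<bullet> v = pnorm 1 w" by (simp add: inner_vec_def v_def pnorm_one abs_sgn)
  ultimately show ?thesis by (intro exI[of _ v]) simp
qed

lemma pnorm_dual_attained:
  assumes "1 \<le> p" "1 \<le> q" "1 / p + 1 / q = 1"
  shows "\<exists>v. pnorm p v \<le> 1 \<and> pnorm q w \<le> w \<bullet> v"
  using assms
proof (cases rule: dual_exponents_cases)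
  case (3 r s)
  then show ?thesis using pnorm_ereal_dual_attained[of r s w] by simp
qed (simp_all add: pnorm_one_dual_attained pnorm_infinity_dual_attained)

lemma lin_class_flip_in_pnorm_ball_iff:
  fixes x w :: "real ^ 'd"
  assumes dual: "1 \<le> p" "1 \<le> q" "1 / p + 1 / q = 1" and "0 \<le> \<epsilon>"
  shows "(\<exists>x'. pnorm p (x - x') \<le> \<epsilon> \<and> lin_class w b x' \<noteq> lin_class w b x) \<longleftrightarrow>
    (if lin_class w b x then w \<bullet> x + b \<le> \<epsilon> * pnorm q w else - (\<epsilon> * pnorm q w) < w \<bullet> x + b)"
proof
  assume "\<exists>x'. pnorm p (x - x') \<le> \<epsilon> \<and> lin_class w b x' \<noteq> lin_class w b x"
  then obtain x' where x': "pnorm p (x - x') \<le> \<epsilon>" "lin_class w b x' \<noteq> lin_class w b x" by blast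
  have "\<bar>w \<bullet> (x - x')\<bar> \<le> pnorm p (x - x') * pnorm q w"
    by (rule abs_inner_le_pnorm_mult_dual[OF dual])
  also have "\<dots> \<le> \<epsilon> * pnorm q w" using x'(1) by (intro mult_right_mono pnorm_nonneg)
  finally have "\<bar>(w \<bullet> x + b) - (w \<bullet> x' + b)\<bar> \<le> \<epsilon> * pnorm q w" by (simp add: inner_diff_right)
  with x'(2) show "if lin_class w b x then w \<bullet> x + b \<le> \<epsilon> * pnorm q w
    else - (\<epsilon> * pnorm q w) < w \<bullet> x + b"
    unfolding lin_class_def by auto
next
  obtain v where v: "pnorm p v \<le> 1" "pnorm q w \<le> w \<bullet> v"
    using pnorm_dual_attained[OF dual] by blast
  have close: "pnorm p (x - (x + c *\<^sub>R v)) \<le> \<epsilon>" if "\<bar>c\<bar> = \<epsilon>" for c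
    using pnorm_scaleR[OF dual(1), of "- c" v] v(1) that \<open>0 \<le> \<epsilon>\<close> by (simp add: mult_left_le)
  have shift: "w \<bullet> (x + c *\<^sub>R v) + b = (w \<bullet> x + b) + c * (w \<bullet> v)" for c
    by (simp add: inner_add_right)
  have "\<epsilon> * pnorm q w \<le> \<epsilon> * (w \<bullet> v)" using v(2) \<open>0 \<le> \<epsilon>\<close> by (rule mult_left_mono)
  moreover assume "if lin_class w b x then w \<bullet> x + b \<le> \<epsilon> * pnorm q w
    else - (\<epsilon> * pnorm q w) < w \<bullet> x + b"
  ultimately have "lin_class w b (x + c *\<^sub>R v) \<noteq> lin_class w b x"
    if "c = (if lin_class w b x then - \<epsilon> else \<epsilon>)" for c
    using that unfolding lin_class_def shift by (auto split: if_splits)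
  with close show "\<exists>x'. pnorm p (x - x') \<le> \<epsilon> \<and> lin_class w b x' \<noteq> lin_class w b x"
    using \<open>0 \<le> \<epsilon>\<close> by (metis abs_minus_cancel abs_of_nonneg)
qed

section \<open>Margins of isotropic Gaussians\<close>

lemma measure_std_normal_atMost: "measure (density lborel std_normal_density) {..c} = Phi c"
proof -
  have "integrable lborel (\<lambda>x. indicator {..c} x *\<^sub>R std_normal_density x)"
    using integrable_std_normal_moment[of 0] by (intro integrable_mult_indicator) auto
  then have "(\<integral>\<^sup>+ x. ennreal (indicator {..c} x *\<^sub>R std_normal_density x) \<partial>lborel)
      = ennreal (LBINT x:{..c}. std_normal_density x)"
    unfolding set_lebesgue_integral_def by (rule nn_integral_eq_integral) auto
  moreover have "emeasure (density lborel std_normal_density) {..c}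
      = (\<integral>\<^sup>+ x. ennreal (indicator {..c} x *\<^sub>R std_normal_density x) \<partial>lborel)"
    by (subst emeasure_density) (auto intro!: nn_integral_cong split: split_indicator)
  ultimately show ?thesis unfolding Phi_def measure_def set_lebesgue_integral_def
    by (simp add: integral_nonneg_AE)
qed

lemma measure_normal_atMost:
  assumes "0 < s"
  shows "measure (density lborel (normal_density \<mu> s)) {..t} = Phi ((t - \<mu>) / s)"
proof -
  define N where "N = density lborel (normal_density \<mu> s)"
  interpret N: prob_space N unfolding N_def using assms by (rule prob_space_normal_density)
  have "distributed N lborel (\<lambda>x. x) (normal_density \<mu> s)"
    by (auto simp: distributed_def N_def distr_id2)
  then have Z: "distributed N lborel (\<lambda>x. (x - \<mu>) / s) std_normal_density"
    by (simp add: N.normal_standard_normal_convert[OF assms])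
  have "measure N {..t} = measure N ((\<lambda>x. (x - \<mu>) / s) -` {..(t - \<mu>) / s} \<inter> space N)"
    using assms by (intro arg_cong[where f = "measure N"]) (auto simp: N_def divide_le_cancel)
  also have "\<dots> = measure (distr N lborel (\<lambda>x. (x - \<mu>) / s)) {..(t - \<mu>) / s}"
    using Z by (intro measure_distr[symmetric]) (auto simp: distributed_def)
  also have "\<dots> = Phi ((t - \<mu>) / s)"
    using Z by (simp add: distributed_def measure_std_normal_atMost)
  finally show ?thesis unfolding N_def .
qed

lemma Phi_minus: "Phi (- x) = 1 - Phi x"
proof -
  define N where "N = density lborel std_normal_density"
  interpret N: prob_space N unfolding N_def by (rule prob_space_normal_density) simp
  have "distributed N lborel (\<lambda>x. x) std_normal_density"
    by (auto simp: distributed_def N_def distr_id2)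
  from N.normal_density_affine[OF this, of "- 1" 0]
  have neg: "distributed N lborel uminus std_normal_density" by simp
  have "Phi (- x) = measure (distr N lborel uminus) {..- x}"
    using neg by (simp add: distributed_def N_def measure_std_normal_atMost)
  also have "\<dots> = measure N (uminus -` {..- x} \<inter> space N)"
    using neg by (intro measure_distr) (auto simp: distributed_def)
  also have "uminus -` {..- x} \<inter> space N = space N - {..<x}" by (auto simp: N_def)
  also have "measure N \<dots> = 1 - measure N {..<x}"
    by (rule N.prob_compl) (simp add: N_def)
  also have "measure N {..<x} = measure N {..x}"
  proof (rule measure_eq_AE)
    show "AE y in N. y \<in> {..<x} \<longleftrightarrow> y \<in> {..x}"
      unfolding N_def using AE_lborel_singleton[of x] by (subst AE_density) (auto elim!: eventually_mono)
  qed (simp_all add: N_def)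
  also have "measure N {..x} = Phi x" unfolding N_def by (rule measure_std_normal_atMost)
  finally show ?thesis .
qed

lemma measure_normal_greaterThan:
  assumes "0 < s"
  shows "measure (density lborel (normal_density \<mu> s)) {t<..} = Phi ((\<mu> - t) / s)"
proof -
  interpret N: prob_space "density lborel (normal_density \<mu> s)"
    using assms by (rule prob_space_normal_density)
  have "measure (density lborel (normal_density \<mu> s)) (UNIV - {..t}) = 1 - Phi ((t - \<mu>) / s)"
    using N.prob_compl[of "{..t}"] assms by (simp add: measure_normal_atMost)
  moreover have "UNIV - {..t} = {t<..}" by auto
  ultimately show ?thesis using Phi_minus[of "(t - \<mu>) / s"] by (simp add: minus_divide_left)
qed

lemma measure_normal_greaterThanAtMost:
  assumes "0 < s" and "a \<le> c"
  shows "measure (density lborel (normal_density \<mu> s)) {a<..c} = Phi ((\<mu> - a) / s) - Phi ((\<mu> - c) / s)"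
proof -
  interpret N: prob_space "density lborel (normal_density \<mu> s)"
    using assms(1) by (rule prob_space_normal_density)
  have "{a<..c} = {a<..} - {c<..}" using assms(2) by auto
  with assms show ?thesis by (simp add: N.finite_measure_Diff measure_normal_greaterThan)
qed

lemma indep_vars_PiM_components:
  assumes "\<And>i. i \<in> I \<Longrightarrow> prob_space (M i)"
  shows "prob_space.indep_vars (PiM I M) M (\<lambda>i f. f i) I"
proof -
  interpret P: prob_space "PiM I M" using assms by (rule prob_space_PiM)
  show ?thesis
  proof (cases "I = {}")
    case True
    show ?thesis unfolding P.indep_vars_def P.indep_sets_def using True by auto
  next
    case False
    have "distr (PiM I M) (PiM I M) (\<lambda>f. \<lambda>i\<in>I. f i) = distr (PiM I M) (PiM I M) (\<lambda>f. f)"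
      by (intro distr_cong) (auto simp: space_PiM PiE_def restrict_def extensional_def fun_eq_iff)
    also have "\<dots> = (\<Pi>\<^sub>M i\<in>I. distr (PiM I M) (M i) (\<lambda>f. f i))"
      using assms by (simp add: distr_PiM_component cong: PiM_cong)
    finally show ?thesis
      using False by (subst P.indep_vars_iff_distr_eq_PiM') auto
  qed
qed

lemma distributed_PiM_normal_lincomb:
  fixes I :: "'i set" and m s c :: "'i \<Rightarrow> real"
  assumes "finite I" and s: "\<And>i. i \<in> I \<Longrightarrow> 0 < s i" and "\<exists>i\<in>I. c i \<noteq> 0"
  shows "distributed (\<Pi>\<^sub>M i\<in>I. density lborel (normal_density (m i) (s i))) lborel
    (\<lambda>f. \<Sum>i\<in>I. c i * f i) (normal_density (\<Sum>i\<in>I. c i * m i) (sqrt (\<Sum>i\<in>I. (c i * s i)\<^sup>2)))"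
proof -
  define N where "N i = density lborel (normal_density (m i) (s i))" for i
  \<comment> \<open>Terms with \<open>c i = 0\<close> are degenerate normals, excluded by \<open>sum_indep_normal\<close>.\<close>
  define J where "J = {i\<in>I. c i \<noteq> 0}"
  have N: "prob_space (N i)" if "i \<in> I" for i
    unfolding N_def using s[OF that] by (rule prob_space_normal_density)
  interpret P: prob_space "PiM I N" using N by (rule prob_space_PiM)
  have "P.indep_vars (\<lambda>_. borel) (\<lambda>i f. c i * f i) I"
    by (rule P.indep_vars_compose2[OF indep_vars_PiM_components[OF N]]) (unfold N_def, measurable)
  then have indep: "P.indep_vars (\<lambda>_. borel) (\<lambda>i f. c i * f i) J"
    by (rule P.indep_vars_subset) (auto simp: J_def)
  have "distributed (PiM I N) lborel (\<lambda>f. f i) (normal_density (m i) (s i))" if "i \<in> I" for i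
  proof -
    have "distr (PiM I N) lborel (\<lambda>f. f i) = distr (PiM I N) (N i) (\<lambda>f. f i)"
      by (intro distr_cong) (auto simp: N_def)
    also have "\<dots> = N i" using N that by (rule distr_PiM_component)
    finally have "distr (PiM I N) lborel (\<lambda>f. f i) = N i" .
    moreover have "(\<lambda>f. f i) \<in> measurable (PiM I N) borel"
      using measurable_component_singleton[OF that, of N] by (simp add: N_def cong: measurable_cong_sets)
    ultimately show ?thesis by (simp add: distributed_def N_def)
  qed
  from P.normal_density_affine[OF this, of _ "c _" 0] s
  have "distributed (PiM I N) lborel (\<lambda>f. c i * f i) (normal_density (c i * m i) (\<bar>c i\<bar> * s i))"
    if "i \<in> J" for i
    using that by (auto simp: J_def)
  from P.sum_indep_normal[OF _ _ indep _ this] assms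
  have "distributed (PiM I N) lborel (\<lambda>f. \<Sum>i\<in>J. c i * f i)
    (normal_density (\<Sum>i\<in>J. c i * m i) (sqrt (\<Sum>i\<in>J. (\<bar>c i\<bar> * s i)\<^sup>2)))"
    by (auto simp: J_def)
  moreover have "(\<Sum>i\<in>J. g i) = (\<Sum>i\<in>I. g i)" if "\<And>i. c i = 0 \<Longrightarrow> g i = 0" for g :: "'i \<Rightarrow> real"
    using \<open>finite I\<close> that by (intro sum.mono_neutral_left) (auto simp: J_def)
  ultimately show ?thesis unfolding N_def[symmetric] by (simp add: power_mult_distrib)
qed

lemma density_PiM_lborel_normal:
  fixes I :: "'i set" and m :: "'i \<Rightarrow> real"
  assumes "finite I" and "0 < s"
  shows "density (\<Pi>\<^sub>M i\<in>I. lborel) (\<lambda>f. \<Prod>i\<in>I. ennreal (normal_density (m i) s (f i)))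
    = (\<Pi>\<^sub>M i\<in>I. density lborel (normal_density (m i) s))"
proof -
  define N where "N i = density lborel (normal_density (m i) s)" for i
  interpret N: product_sigma_finite N
    unfolding product_sigma_finite_def N_def
    using prob_space_normal_density[OF \<open>0 < s\<close>] prob_space_imp_sigma_finite by blast
  interpret L: product_sigma_finite "\<lambda>_. lborel :: real measure"
    by (simp add: product_sigma_finite_def lborel.sigma_finite_measure_axioms)
  show ?thesis unfolding N_def[symmetric]
  proof (rule N.PiM_eqI)
    show "sets (density (\<Pi>\<^sub>M i\<in>I. lborel) (\<lambda>f. \<Prod>i\<in>I. ennreal (normal_density (m i) s (f i))))
      = sets (\<Pi>\<^sub>M i\<in>I. N i)"
      by (simp add: N_def cong: sets_PiM_cong)
  next
    fix A assume "\<And>i. i \<in> I \<Longrightarrow> A i \<in> sets (N i)"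
    then have A: "\<And>i. i \<in> I \<Longrightarrow> A i \<in> sets borel" by (simp add: N_def)
    have "indicator (Pi\<^sub>E I A) f = (\<Prod>i\<in>I. indicator (A i) (f i) :: ennreal)"
      if "f \<in> space (\<Pi>\<^sub>M i\<in>I. lborel)" for f
      using that \<open>finite I\<close>
      by (auto simp: space_PiM PiE_def Pi_def extensional_def indicator_def prod.neutral)
    then have "emeasure (density (\<Pi>\<^sub>M i\<in>I. lborel) (\<lambda>f. \<Prod>i\<in>I. ennreal (normal_density (m i) s (f i))))
        (Pi\<^sub>E I A)
      = (\<integral>\<^sup>+ f. (\<Prod>i\<in>I. ennreal (normal_density (m i) s (f i)) * indicator (A i) (f i))
          \<partial>(\<Pi>\<^sub>M i\<in>I. lborel))"
      using A \<open>finite I\<close> by (subst emeasure_density) (auto intro!: sets_PiM_I_finite nn_integral_cong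
          simp: prod.distrib)
    also have "\<dots> = (\<Prod>i\<in>I. \<integral>\<^sup>+ x. ennreal (normal_density (m i) s x) * indicator (A i) x \<partial>lborel)"
      using A \<open>finite I\<close> by (intro L.product_nn_integral_prod) auto
    also have "\<dots> = (\<Prod>i\<in>I. emeasure (N i) (A i))"
      using A by (intro prod.cong refl) (simp add: N_def emeasure_density)
    finally show "emeasure (density (\<Pi>\<^sub>M i\<in>I. lborel)
        (\<lambda>f. \<Prod>i\<in>I. ennreal (normal_density (m i) s (f i)))) (Pi\<^sub>E I A)
      = (\<Prod>i\<in>I. emeasure (N i) (A i))" .
  qed fact
qed

lemma gauss_iso_eq_distr_PiM:
  fixes m :: "real ^ 'd"
  assumes "0 < s"
  shows "gauss_iso m s = distr (\<Pi>\<^sub>M b\<in>Basis. density lborel (normal_density (m \<bullet> b) s)) borel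
    (\<lambda>f. \<Sum>b\<in>Basis. f b *\<^sub>R b)"
proof -
  let ?P = "\<Pi>\<^sub>M b\<in>(Basis :: (real ^ 'd) set). (lborel :: real measure)"
  let ?g = "\<lambda>x :: real ^ 'd. ennreal (\<Prod>b\<in>Basis. normal_density (m \<bullet> b) s (x \<bullet> b))"
  let ?\<Phi> = "\<lambda>f. \<Sum>b\<in>(Basis :: (real ^ 'd) set). f b *\<^sub>R b"
  have "inj (\<lambda>i :: 'd. axis i (1 :: real))" by (auto intro: injI simp: axis_eq_axis)
  then have "gauss_iso m s = density lborel ?g"
    by (simp add: gauss_iso_def Basis_vec_def prod.reindex cart_eq_inner_axis UNION_singleton_eq_range)
  also have "\<dots> = distr (density ?P (\<lambda>f. ?g (?\<Phi> f))) borel ?\<Phi>"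
    by (subst lborel_eq) (rule density_distr, measurable)
  also have "density ?P (\<lambda>f. ?g (?\<Phi> f))
      = density ?P (\<lambda>f. \<Prod>b\<in>Basis. ennreal (normal_density (m \<bullet> b) s (f b)))"
    by (intro density_cong) (auto simp: inner_sum_left inner_Basis if_distrib prod_ennreal cong: if_cong)
  also have "\<dots> = (\<Pi>\<^sub>M b\<in>Basis. density lborel (normal_density (m \<bullet> b) s))"
    using assms by (intro density_PiM_lborel_normal) simp_all
  finally show ?thesis .
qed

lemma distributed_inner_gauss_iso:
  fixes m w :: "real ^ 'd"
  assumes "0 < s" and "w \<noteq> 0"
  shows "distributed (gauss_iso m s) lborel (\<lambda>x. w \<bullet> x) (normal_density (w \<bullet> m) (s * norm w))"
proof -
  let ?P = "\<Pi>\<^sub>M b\<in>(Basis :: (real ^ 'd) set). density lborel (normal_density (m \<bullet> b) s)"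
  let ?\<Phi> = "\<lambda>f. \<Sum>b\<in>(Basis :: (real ^ 'd) set). f b *\<^sub>R b"
  have "sets ?P = sets (\<Pi>\<^sub>M b\<in>(Basis :: (real ^ 'd) set). (lborel :: real measure))"
    by (intro sets_PiM_cong) simp_all
  then have "?\<Phi> \<in> measurable ?P borel"
    unfolding measurable_cong_sets[OF _ refl] by measurable
  then have "distr (distr ?P borel ?\<Phi>) lborel (\<lambda>x. w \<bullet> x) = distr ?P lborel ((\<lambda>x. w \<bullet> x) \<circ> ?\<Phi>)"
    by (intro distr_distr) simp_all
  moreover have "distributed ?P lborel ((\<lambda>x. w \<bullet> x) \<circ> ?\<Phi>) (normal_density (w \<bullet> m) (s * norm w))"
  proof -
    have "\<exists>b\<in>Basis. w \<bullet> b \<noteq> 0" using \<open>w \<noteq> 0\<close> by (metis euclidean_all_zero_iff)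
    from distributed_PiM_normal_lincomb[OF _ _ this, where m = "\<lambda>b. m \<bullet> b" and s = "\<lambda>_. s"] \<open>0 < s\<close>
    have "distributed ?P lborel (\<lambda>f. \<Sum>b\<in>Basis. (w \<bullet> b) * f b)
      (normal_density (\<Sum>b\<in>Basis. (w \<bullet> b) * (m \<bullet> b)) (sqrt (\<Sum>b\<in>Basis. ((w \<bullet> b) * s)\<^sup>2)))"
      by simp
    moreover have "(\<Sum>b\<in>Basis. ((w \<bullet> b) * s)\<^sup>2) = (s * norm w)\<^sup>2"
      unfolding power_mult_distrib sum_distrib_right[symmetric] power2_norm_eq_inner
        euclidean_inner[of w w]
      by (simp add: power2_eq_square)
    moreover have "(\<lambda>f. \<Sum>b\<in>Basis. (w \<bullet> b) * f b) = (\<lambda>x. w \<bullet> x) \<circ> ?\<Phi>"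
      by (auto simp: fun_eq_iff inner_sum_right intro!: sum.cong)
    moreover have "(\<Sum>b\<in>Basis. (w \<bullet> b) * (m \<bullet> b)) = w \<bullet> m"
      by (rule euclidean_inner[symmetric])
    ultimately show ?thesis using \<open>0 < s\<close> by simp
  qed
  ultimately show ?thesis
    unfolding gauss_iso_eq_distr_PiM[OF \<open>0 < s\<close>] distributed_def by simp
qed

lemma prob_space_gauss_iso: "0 < s \<Longrightarrow> prob_space (gauss_iso m s)"
  unfolding gauss_iso_eq_distr_PiM
  by (intro prob_space.prob_space_distr prob_space_PiM prob_space_normal_density) simp_all

lemma measure_gauss_iso_margin:
  fixes m w :: "real ^ 'd"
  assumes "0 < s" and "w \<noteq> 0" and "I \<in> sets borel"
  shows "measure (gauss_iso m s) {x. w \<bullet> x + b \<in> I}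
    = measure (density lborel (normal_density (w \<bullet> m + b) (s * norm w))) I"
proof -
  interpret G: prob_space "gauss_iso m s" using \<open>0 < s\<close> by (rule prob_space_gauss_iso)
  from G.normal_density_affine[OF distributed_inner_gauss_iso[OF assms(1,2)], of 1 b] assms
  have margin: "distributed (gauss_iso m s) lborel (\<lambda>x. b + w \<bullet> x)
    (normal_density (b + w \<bullet> m) (s * norm w))"
    by simp
  have "{x. w \<bullet> x + b \<in> I} = (\<lambda>x. b + w \<bullet> x) -` I \<inter> space (gauss_iso m s)"
    by (auto simp: gauss_iso_def add.commute)
  also have "measure (gauss_iso m s) \<dots> = measure (distr (gauss_iso m s) lborel (\<lambda>x. b + w \<bullet> x)) I"
    using margin assms(3) by (intro measure_distr[symmetric]) (simp_all add: distributed_def)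
  finally show ?thesis
    using margin by (simp add: distributed_def add.commute)
qed

section \<open>Adversarial and misclassification probabilities\<close>

lemma measure_if_label:
  assumes "finite_measure M" and [measurable]: "X \<in> measurable M N" "Y \<in> measurable M (count_space UNIV)"
    and [measurable]: "A \<in> sets N" "B \<in> sets N"
  shows "measure M {\<omega>\<in>space M. if Y \<omega> then X \<omega> \<in> A else X \<omega> \<in> B}
    = measure M {\<omega>\<in>space M. Y \<omega> \<and> X \<omega> \<in> A} + measure M {\<omega>\<in>space M. \<not> Y \<omega> \<and> X \<omega> \<in> B}"
proof -
  interpret finite_measure M by fact
  have "{\<omega>\<in>space M. if Y \<omega> then X \<omega> \<in> A else X \<omega> \<in> B}
    = {\<omega>\<in>space M. Y \<omega> \<and> X \<omega> \<in> A} \<union> {\<omega>\<in>space M. \<not> Y \<omega> \<and> X \<omega> \<in> B}" by auto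
  moreover have "{\<omega>\<in>space M. Y \<omega> \<and> X \<omega> \<in> A} \<in> sets M" "{\<omega>\<in>space M. \<not> Y \<omega> \<and> X \<omega> \<in> B} \<in> sets M"
    by measurable
  ultimately show ?thesis by (simp add: finite_measure_Union disjoint_iff)
qed

locale gaussian_classes =
  fixes M :: "'s measure" and X :: "'s \<Rightarrow> real ^ 'd" and Y :: "'s \<Rightarrow> bool"
    and mu_plus mu_minus :: "real ^ 'd" and \<sigma> :: real
  assumes prob_space: "prob_space M"
    and sigma_pos: "0 < \<sigma>"
    and X_measurable [measurable]: "X \<in> borel_measurable M"
    and Y_measurable [measurable]: "Y \<in> measurable M (count_space UNIV)"
    and law_plus: "\<And>A. A \<in> sets borel \<Longrightarrow>
      measure M {\<omega>\<in>space M. Y \<omega> \<and> X \<omega> \<in> A} = 1/2 * measure (gauss_iso mu_plus \<sigma>) A"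
    and law_minus: "\<And>A. A \<in> sets borel \<Longrightarrow>
      measure M {\<omega>\<in>space M. \<not> Y \<omega> \<and> X \<omega> \<in> A} = 1/2 * measure (gauss_iso mu_minus \<sigma>) A"
begin

sublocale prob_space M by (fact prob_space)

lemma measure_margin:
  assumes "w \<noteq> 0" and "A \<in> sets borel" "B \<in> sets borel"
  shows "measure M {\<omega>\<in>space M. if Y \<omega> then w \<bullet> X \<omega> + b \<in> A else w \<bullet> X \<omega> + b \<in> B}
    = 1/2 * measure (density lborel (normal_density (w \<bullet> mu_plus + b) (\<sigma> * norm w))) A
    + 1/2 * measure (density lborel (normal_density (w \<bullet> mu_minus + b) (\<sigma> * norm w))) B"
  using measure_if_label[of M "\<lambda>\<omega>. w \<bullet> X \<omega> + b" borel Y A B] assms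
    law_plus[of "{x. w \<bullet> x + b \<in> A}"] law_minus[of "{x. w \<bullet> x + b \<in> B}"]
    measure_gauss_iso_margin[OF sigma_pos \<open>w \<noteq> 0\<close>]
  by (simp add: finite_measure_axioms)

lemma prob_misclassified:
  assumes "w \<noteq> 0"
  defines "k \<equiv> \<sigma> * norm w"
  shows "measure M {\<omega>\<in>space M. lin_class w b (X \<omega>) \<noteq> Y \<omega>}
    = 1/2 * Phi (- (w \<bullet> mu_plus + b) / k) + 1/2 * Phi ((w \<bullet> mu_minus + b) / k)"
proof -
  have "{\<omega>\<in>space M. lin_class w b (X \<omega>) \<noteq> Y \<omega>}
    = {\<omega>\<in>space M. if Y \<omega> then w \<bullet> X \<omega> + b \<in> {..0} else w \<bullet> X \<omega> + b \<in> {0<..}}"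
    by (auto simp: lin_class_def)
  with assms sigma_pos show ?thesis
    by (simp add: measure_margin measure_normal_atMost measure_normal_greaterThan)
qed

lemma prob_adversarial:
  assumes "1 \<le> p" "1 \<le> q" "1 / p + 1 / q = 1" and "w \<noteq> 0" and "0 \<le> \<epsilon>"
  defines "k \<equiv> \<sigma> * norm w"
  shows "measure M {\<omega>\<in>space M. lin_class w b (X \<omega>) = Y \<omega> \<and>
      (\<exists>x'. pnorm p (X \<omega> - x') \<le> \<epsilon> \<and> lin_class w b x' \<noteq> lin_class w b (X \<omega>))}
    = 1/2 * (Phi ((w \<bullet> mu_plus + b) / k) - Phi ((w \<bullet> mu_plus + b - \<epsilon> * pnorm q w) / k))
    + 1/2 * (Phi ((w \<bullet> mu_minus + b + \<epsilon> * pnorm q w) / k) - Phi ((w \<bullet> mu_minus + b) / k))"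
proof -
  have "0 \<le> \<epsilon> * pnorm q w" using \<open>0 \<le> \<epsilon>\<close> by (simp add: pnorm_nonneg)
  have "{\<omega>\<in>space M. lin_class w b (X \<omega>) = Y \<omega> \<and>
      (\<exists>x'. pnorm p (X \<omega> - x') \<le> \<epsilon> \<and> lin_class w b x' \<noteq> lin_class w b (X \<omega>))}
    = {\<omega>\<in>space M. if Y \<omega> then w \<bullet> X \<omega> + b \<in> {0<..\<epsilon> * pnorm q w}
        else w \<bullet> X \<omega> + b \<in> {- (\<epsilon> * pnorm q w)<..0}}"
    by (simp only: lin_class_flip_in_pnorm_ball_iff[OF assms(1-3) \<open>0 \<le> \<epsilon>\<close>])
      (auto simp: lin_class_def)
  with assms sigma_pos \<open>0 \<le> \<epsilon> * pnorm q w\<close> show ?thesis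
    by (simp add: measure_margin measure_normal_greaterThanAtMost)
qed

end

theorem theorem3:
  fixes M :: "'s measure" and X :: "'s \<Rightarrow> real ^ 'd" and Y :: "'s \<Rightarrow> bool"
    and p q :: ereal and mu_plus mu_minus w :: "real ^ 'd" and \<sigma> b \<epsilon> :: real
  assumes "prob_space M"
    and "1 \<le> p" and "1 \<le> q" and "1 / p + 1 / q = 1"
    and "\<sigma> > 0"
    and "X \<in> borel_measurable M" and "Y \<in> measurable M (count_space UNIV)"
    and "measure M {\<omega>\<in>space M. Y \<omega>} = 1/2" and "measure M {\<omega>\<in>space M. \<not> Y \<omega>} = 1/2"
    and "\<And>A. A \<in> sets borel \<Longrightarrow>
           measure M {\<omega>\<in>space M. Y \<omega> \<and> X \<omega> \<in> A} = 1/2 * measure (gauss_iso mu_plus \<sigma>) A"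
    and "\<And>A. A \<in> sets borel \<Longrightarrow>
           measure M {\<omega>\<in>space M. \<not> Y \<omega> \<and> X \<omega> \<in> A} = 1/2 * measure (gauss_iso mu_minus \<sigma>) A"
    and "w \<noteq> 0"
    and "\<epsilon> > 0"
  defines "mu \<equiv> (1/2) *\<^sub>R (mu_plus - mu_minus)"
    and "b' \<equiv> w \<bullet> ((1/2) *\<^sub>R (mu_plus + mu_minus)) + b"
    and "p_m \<equiv> measure M {\<omega>\<in>space M. lin_class w b (X \<omega>) \<noteq> Y \<omega>}"
    and "p_adv \<equiv> measure M {\<omega>\<in>space M. lin_class w b (X \<omega>) = Y \<omega> \<and>
             (\<exists>x'. pnorm p (X \<omega> - x') \<le> \<epsilon> \<and> lin_class w b x' \<noteq> lin_class w b (X \<omega>))}"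
  shows "p_adv = 1 - p_m - (1/2) *
           (Phi ((w \<bullet> mu + b') / (norm w * \<sigma>) - pnorm q w / norm w * (\<epsilon> / \<sigma>))
          + Phi ((w \<bullet> mu - b') / (norm w * \<sigma>) - pnorm q w / norm w * (\<epsilon> / \<sigma>)))"
proof -
  interpret gaussian_classes M X Y mu_plus mu_minus \<sigma>
    by (rule gaussian_classes.intro) (fact assms)+
  define k where "k = \<sigma> * norm w"
  define A_plus where "A_plus = (w \<bullet> mu + b') / (norm w * \<sigma>)"
  define A_minus where "A_minus = (w \<bullet> mu - b') / (norm w * \<sigma>)"
  define C where "C = pnorm q w / norm w * (\<epsilon> / \<sigma>)"
  have mu_plus: "w \<bullet> mu_plus + b = w \<bullet> mu + b'" and mu_minus: "w \<bullet> mu_minus + b = - (w \<bullet> mu - b')"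
    unfolding mu_def b'_def by (simp_all add: inner_diff_right inner_add_right algebra_simps)
  have p_m: "p_m = 1/2 * Phi (- (w \<bullet> mu_plus + b) / k) + 1/2 * Phi ((w \<bullet> mu_minus + b) / k)"
    unfolding p_m_def k_def by (rule prob_misclassified[OF \<open>w \<noteq> 0\<close>])
  have p_adv: "p_adv =
      1/2 * (Phi ((w \<bullet> mu_plus + b) / k) - Phi ((w \<bullet> mu_plus + b - \<epsilon> * pnorm q w) / k))
    + 1/2 * (Phi ((w \<bullet> mu_minus + b + \<epsilon> * pnorm q w) / k) - Phi ((w \<bullet> mu_minus + b) / k))"
    unfolding p_adv_def k_def using \<open>\<epsilon> > 0\<close> by (intro prob_adversarial[OF assms(2-4) \<open>w \<noteq> 0\<close>]) simp
  have args: "(w \<bullet> mu_plus + b) / k = A_plus" "- (w \<bullet> mu_plus + b) / k = - A_plus"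
    "(w \<bullet> mu_plus + b - \<epsilon> * pnorm q w) / k = A_plus - C"
    "(w \<bullet> mu_minus + b) / k = - A_minus" "(w \<bullet> mu_minus + b + \<epsilon> * pnorm q w) / k = - (A_minus - C)"
    unfolding mu_plus mu_minus k_def A_plus_def A_minus_def C_def using \<open>w \<noteq> 0\<close> \<open>\<sigma> > 0\<close>
    by (simp_all add: field_simps)
  show ?thesis
    unfolding p_m p_adv args A_plus_def[symmetric] A_minus_def[symmetric] C_def[symmetric] Phi_minus
    by (simp add: field_simps)
qed

end
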